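(* Let $X\subseteq W$ be a block subspace, $(y_n)$ a block sequence in $W$, $\alpha<\omega_1$ and $K,C\ge1$. Assume that (a) II has a strategy in $F^\alpha_X$ to play $(x_0,\dots,x_k)$ such that $(x_0,\dots,x_k)\sim_K(y_0,\dots,y_k)$, and (b) II has a strategy in $A^\alpha_X$ to play $(u_0,v_0,\dots,u_k,v_k)$ such that $(u_0,\dots,u_k)\sim_C(v_0,\dots,v_k)$. Then II has a strategy in $G^\alpha_X$ to play $(v_0,\dots,v_k)$ such that $(v_0,\dots,v_k)\sim_{KC}(y_0,\dots,y_k)$.
   Context: Let $\mathcal W$ be a real Banach space with Schauder basis $(e_n)$. Fix a countable subfield $\mathfrak F\subseteq\mathbb R$ such that $\|\sum_{n\le m}a_ne_n\|\in\mathfrak F$ whenever all $a_n\in\mathfrak F$, and let $W$ be the $\mathfrak F$-vector space of finite $\mathfrak F$-linear combinations of the $e_n$, with the norm of $\mathcal W$; subspaces are $\mathfrak F$-linear in $W$. For nonzero $x=\sum a_ne_n$, ${\rm supp}(x)=\{n:a_n\neq0\}$, and $x<y$ means $\max{\rm supp}(x)<\min{\rm supp}(y)$. A block sequence is a sequence of nonzero vectors $x_0<x_1<\dots$; a block subspace is the span of an infinite block sequence. $[e_i]_{i>n}$ is the span of $\{e_i:i>n\}$. $(x_i)_{i\le k}\sim_K(y_i)_{i\le k}$ means $\frac1K\|\sum a_ix_i\|\le\|\sum a_iy_i\|\le K\|\sum a_ix_i\|$ for all real $a_i$. In each game below, $\xi_l$ denotes ordinals with $\xi_0<\alpha$ and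 $\xi_l<\xi_{l-1}$ for $l\ge1$, the game ends after II's response in the round $k$ in which $\xi_k=0$ (immediately with empty outcome if $\alpha=0$). Game $G^\alpha_X$: in round $l$, I plays a block subspace $Y_l\subseteq X$ and $\xi_l$; II plays a finite-dimensional $F_l\subseteq Y_l$ and a nonzero $v_l\in F_0+\dots+F_l$; outcome $(v_0,\dots,v_k)$. Game $F^\alpha_X$: in round $l$, I plays an integer $n_l$ and $\xi_l$; II plays a finite-dimensional $F_l\subseteq X\cap[e_i]_{i>n_l}$ and a nonzero $x_l\in F_0+\dots+F_l$; outcome $(x_0,\dots,x_k)$. Game $A^\alpha_X$: in round $l$, II plays an integer $n_l$; I plays a finite-dimensional $E_l\subseteq X\cap[e_i]_{i>n_l}$, a nonzero $u_l\in E_0+\dots+E_l$, a block subspace $Y_l\subseteq X$ and $\xi_l$; II plays a finite-dimensional $F_l\subseteq Y_l$ and a nonzero $v_l\in F_0+\dots+F_l$; outcome $(u_0,v_0,\dots,u_k,v_k)$. "II has a strategy to play ... such that P" means II can ensure the outcome satisfies P. *)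

theory Defs
  imports "HOL-Analysis.Analysis"
begin

definition schauder_basis :: "(nat \<Rightarrow> 'a::banach) \<Rightarrow> bool" where
  "schauder_basis e \<longleftrightarrow>
     (\<forall>x. \<exists>!c::nat \<Rightarrow> real. (\<lambda>m. \<Sum>n<m. c n *\<^sub>R e n) \<longlonglongrightarrow> x)"

definition coord :: "(nat \<Rightarrow> 'a::banach) \<Rightarrow> 'a \<Rightarrow> nat \<Rightarrow> real" where
  "coord e x = (THE c. (\<lambda>m. \<Sum>n<m. c n *\<^sub>R e n) \<longlonglongrightarrow> x)"

definition supp :: "(nat \<Rightarrow> 'a::banach) \<Rightarrow> 'a \<Rightarrow> nat set" where
  "supp e x = {n. coord e x n \<noteq> 0}"

text \<open>x < y for nonzero vectors: max supp x < min supp y.\<close>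
definition block_lt :: "(nat \<Rightarrow> 'a::banach) \<Rightarrow> 'a \<Rightarrow> 'a \<Rightarrow> bool" where
  "block_lt e x y \<longleftrightarrow> Max (supp e x) < Min (supp e y)"

definition countable_subfield :: "real set \<Rightarrow> bool" where
  "countable_subfield F \<longleftrightarrow> countable F \<and> 0 \<in> F \<and> 1 \<in> F \<and>
     (\<forall>a\<in>F. \<forall>b\<in>F. a + b \<in> F \<and> a * b \<in> F) \<and>
     (\<forall>a\<in>F. - a \<in> F \<and> inverse a \<in> F)"

definition norm_closed :: "(nat \<Rightarrow> 'a::banach) \<Rightarrow> real set \<Rightarrow> bool" where
  "norm_closed e F \<longleftrightarrow>
     (\<forall>m (a::nat \<Rightarrow> real). (\<forall>n\<le>m. a n \<in> F) \<longrightarrow> norm (\<Sum>n\<le>m. a n *\<^sub>R e n) \<in> F)"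

definition Fspan :: "real set \<Rightarrow> 'a::real_vector set \<Rightarrow> 'a set" where
  "Fspan F A = {x. \<exists>S c. finite S \<and> S \<subseteq> A \<and> (\<forall>v\<in>S. c v \<in> F) \<and> x = (\<Sum>v\<in>S. c v *\<^sub>R v)}"

definition Wsp :: "(nat \<Rightarrow> 'a::banach) \<Rightarrow> real set \<Rightarrow> 'a set" where
  "Wsp e F = Fspan F (range e)"

definition tailsp :: "(nat \<Rightarrow> 'a::banach) \<Rightarrow> real set \<Rightarrow> int \<Rightarrow> 'a set" where
  "tailsp e F n = Fspan F {e i | i. int i > n}"

definition Fsubspace :: "(nat \<Rightarrow> 'a::banach) \<Rightarrow> real set \<Rightarrow> 'a set \<Rightarrow> bool" where
  "Fsubspace e F V \<longleftrightarrow> V \<subseteq> Wsp e F \<and> 0 \<in> V \<and> (\<forall>x\<in>V. \<forall>y\<in>V. x + y \<in> V) \<and>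
     (\<forall>c\<in>F. \<forall>x\<in>V. c *\<^sub>R x \<in> V)"

definition Ffindim :: "(nat \<Rightarrow> 'a::banach) \<Rightarrow> real set \<Rightarrow> 'a set \<Rightarrow> bool" where
  "Ffindim e F V \<longleftrightarrow> Fsubspace e F V \<and> (\<exists>B. finite B \<and> V = Fspan F B)"

definition block_seq :: "(nat \<Rightarrow> 'a::banach) \<Rightarrow> real set \<Rightarrow> (nat \<Rightarrow> 'a) \<Rightarrow> bool" where
  "block_seq e F x \<longleftrightarrow> (\<forall>n. x n \<in> Wsp e F \<and> x n \<noteq> 0 \<and> block_lt e (x n) (x (Suc n)))"

definition block_subspace :: "(nat \<Rightarrow> 'a::banach) \<Rightarrow> real set \<Rightarrow> 'a set \<Rightarrow> bool" where
  "block_subspace e F Y \<longleftrightarrow> (\<exists>x. block_seq e F x \<and> Y = Fspan F (range x))"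

definition sumset :: "'a::real_vector set list \<Rightarrow> 'a set" where
  "sumset Fs = {sum_list xs | xs. list_all2 (\<in>) xs Fs}"

definition equiv_seq :: "real \<Rightarrow> 'a::real_normed_vector list \<Rightarrow> 'a list \<Rightarrow> bool" where
  "equiv_seq K xs ys \<longleftrightarrow> length xs = length ys \<and>
     (\<forall>a::nat \<Rightarrow> real.
        norm (\<Sum>i<length xs. a i *\<^sub>R xs ! i) / K \<le> norm (\<Sum>i<length ys. a i *\<^sub>R ys ! i) \<and>
        norm (\<Sum>i<length ys. a i *\<^sub>R ys ! i) \<le> K * norm (\<Sum>i<length xs. a i *\<^sub>R xs ! i))"

text \<open>Ordinals are elements of a well-ordered type; the ordinal 0 is the least element.\<close>
definition is_zero :: "'o::wellorder \<Rightarrow> bool" where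
  "is_zero \<xi> \<longleftrightarrow> (\<forall>\<beta>. \<not> \<beta> < \<xi>)"

definition ord_legal :: "'o::wellorder \<Rightarrow> 'o list \<Rightarrow> bool" where
  "ord_legal \<alpha> \<xi>s \<longleftrightarrow>
     (\<forall>l<length \<xi>s. if l = 0 then \<xi>s ! 0 < \<alpha> else \<xi>s ! l < \<xi>s ! (l - 1))"

text \<open>Game G: I plays (Y_l, xi_l); II plays (F_l, v_l). A strategy for II maps the
  list of I's moves so far (including the current one) to II's response.
  II wins with P if its responses are always legal and every finished play
  (the last ordinal is 0) has outcome satisfying P; if alpha = 0 the empty outcome must satisfy P.\<close>
definition II_wins_G :: "(nat \<Rightarrow> 'a::banach) \<Rightarrow> real set \<Rightarrow> 'a set \<Rightarrow> 'o::wellorder \<Rightarrow>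
    ('a list \<Rightarrow> bool) \<Rightarrow> bool" where
  "II_wins_G e F X \<alpha> P \<longleftrightarrow> (is_zero \<alpha> \<longrightarrow> P []) \<and>
    (\<exists>\<sigma> :: ('a set \<times> 'o) list \<Rightarrow> ('a set \<times> 'a).
      \<forall>ms. ms \<noteq> [] \<and> ord_legal \<alpha> (map snd ms) \<and>
           (\<forall>l<length ms. block_subspace e F (fst (ms ! l)) \<and> fst (ms ! l) \<subseteq> X) \<longrightarrow>
        (let rs = map (\<lambda>l. \<sigma> (take (Suc l) ms)) [0..<length ms] in
          Ffindim e F (fst (last rs)) \<and> fst (last rs) \<subseteq> fst (last ms) \<and>
          snd (last rs) \<noteq> 0 \<and> snd (last rs) \<in> sumset (map fst rs) \<and>
          (is_zero (snd (last ms)) \<longrightarrow> P (map snd rs))))"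

text \<open>Game F: I plays (n_l, xi_l); II plays (F_l, x_l) with F_l a finite-dimensional
  subspace of X \<inter> [e_i]_{i>n_l}.\<close>
definition II_wins_F :: "(nat \<Rightarrow> 'a::banach) \<Rightarrow> real set \<Rightarrow> 'a set \<Rightarrow> 'o::wellorder \<Rightarrow>
    ('a list \<Rightarrow> bool) \<Rightarrow> bool" where
  "II_wins_F e F X \<alpha> P \<longleftrightarrow> (is_zero \<alpha> \<longrightarrow> P []) \<and>
    (\<exists>\<sigma> :: (int \<times> 'o) list \<Rightarrow> ('a set \<times> 'a).
      \<forall>ms. ms \<noteq> [] \<and> ord_legal \<alpha> (map snd ms) \<longrightarrow>
        (let rs = map (\<lambda>l. \<sigma> (take (Suc l) ms)) [0..<length ms] in
          Ffindim e F (fst (last rs)) \<and> fst (last rs) \<subseteq> X \<inter> tailsp e F (fst (last ms)) \<and>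
          snd (last rs) \<noteq> 0 \<and> snd (last rs) \<in> sumset (map fst rs) \<and>
          (is_zero (snd (last ms)) \<longrightarrow> P (map snd rs))))"

text \<open>Game A: in round l, II plays n_l (as a function tau of I's earlier moves);
  I plays (E_l, u_l, Y_l, xi_l); II plays (F_l, v_l) (as a function sigma of I's moves
  up to and including round l). The outcome (u_0,v_0,...,u_k,v_k) is passed to P
  as the pair of lists (u_0..u_k) and (v_0..v_k).\<close>
definition II_wins_A :: "(nat \<Rightarrow> 'a::banach) \<Rightarrow> real set \<Rightarrow> 'a set \<Rightarrow> 'o::wellorder \<Rightarrow>
    ('a list \<Rightarrow> 'a list \<Rightarrow> bool) \<Rightarrow> bool" where
  "II_wins_A e F X \<alpha> P \<longleftrightarrow> (is_zero \<alpha> \<longrightarrow> P [] []) \<and>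
    (\<exists>(\<tau> :: ('a set \<times> 'a \<times> 'a set \<times> 'o) list \<Rightarrow> int)
      (\<sigma> :: ('a set \<times> 'a \<times> 'a set \<times> 'o) list \<Rightarrow> ('a set \<times> 'a)).
      \<forall>ms. ms \<noteq> [] \<and> ord_legal \<alpha> (map (\<lambda>m. snd (snd (snd m))) ms) \<and>
           (\<forall>l<length ms.
              Ffindim e F (fst (ms ! l)) \<and>
              fst (ms ! l) \<subseteq> X \<inter> tailsp e F (\<tau> (take l ms)) \<and>
              fst (snd (ms ! l)) \<noteq> 0 \<and>
              fst (snd (ms ! l)) \<in> sumset (map fst (take (Suc l) ms)) \<and>
              block_subspace e F (fst (snd (snd (ms ! l)))) \<and>
              fst (snd (snd (ms ! l))) \<subseteq> X) \<longrightarrow>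
        (let rs = map (\<lambda>l. \<sigma> (take (Suc l) ms)) [0..<length ms] in
          Ffindim e F (fst (last rs)) \<and> fst (last rs) \<subseteq> fst (snd (snd (last ms))) \<and>
          snd (last rs) \<noteq> 0 \<and> snd (last rs) \<in> sumset (map fst rs) \<and>
          (is_zero (snd (snd (snd (last ms)))) \<longrightarrow>
             P (map (\<lambda>m. fst (snd m)) ms) (map snd rs))))"

end

theory Submission
  imports Defs
begin

text \<open>II plays G by running two auxiliary games at once. Each round, II's strategy in A
  proposes an integer n; this and I's ordinal are fed to II's strategy in F, whose answer
  (E, u) becomes I's move in A together with I's block subspace Y from G. II's strategy in A
  then answers with (F, v), which II copies into G. So the u's of the simulated A-play are
  the x's of the simulated F-play, and the bounds compose: u ~K y and u ~C v give v ~KC y.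
  Nothing about the Banach space is used.\<close>

definition responses :: "('m list \<Rightarrow> 'r) \<Rightarrow> 'm list \<Rightarrow> 'r list" where
  "responses \<sigma> ms = map (\<lambda>l. \<sigma> (take (Suc l) ms)) [0..<length ms]"

lemma length_responses [simp]: "length (responses \<sigma> ms) = length ms"
  by (simp add: responses_def)

lemma nth_responses: "l < length ms \<Longrightarrow> responses \<sigma> ms ! l = \<sigma> (take (Suc l) ms)"
  by (simp add: responses_def)

lemma responses_take: "responses \<sigma> (take k ms) = take k (responses \<sigma> ms)"
  by (rule nth_equalityI) (auto simp: responses_def min_def split: if_splits)

lemma last_responses: "ms \<noteq> [] \<Longrightarrow> last (responses \<sigma> ms) = \<sigma> ms"
  by (cases ms rule: rev_exhaust) (simp_all add: responses_def)

definition G_strategy_wins :: "(nat \<Rightarrow> 'a::banach) \<Rightarrow> real set \<Rightarrow> 'a set \<Rightarrow> 'o::wellorder \<Rightarrow>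
    ('a list \<Rightarrow> bool) \<Rightarrow> (('a set \<times> 'o) list \<Rightarrow> 'a set \<times> 'a) \<Rightarrow> bool" where
  "G_strategy_wins e F X \<alpha> P \<sigma> \<longleftrightarrow>
    (\<forall>ms. ms \<noteq> [] \<and> ord_legal \<alpha> (map snd ms) \<and>
           (\<forall>l<length ms. block_subspace e F (fst (ms ! l)) \<and> fst (ms ! l) \<subseteq> X) \<longrightarrow>
        (let rs = responses \<sigma> ms in
          Ffindim e F (fst (last rs)) \<and> fst (last rs) \<subseteq> fst (last ms) \<and>
          snd (last rs) \<noteq> 0 \<and> snd (last rs) \<in> sumset (map fst rs) \<and>
          (is_zero (snd (last ms)) \<longrightarrow> P (map snd rs))))"

definition F_strategy_wins :: "(nat \<Rightarrow> 'a::banach) \<Rightarrow> real set \<Rightarrow> 'a set \<Rightarrow> 'o::wellorder \<Rightarrow>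
    ('a list \<Rightarrow> bool) \<Rightarrow> ((int \<times> 'o) list \<Rightarrow> 'a set \<times> 'a) \<Rightarrow> bool" where
  "F_strategy_wins e F X \<alpha> P \<sigma> \<longleftrightarrow>
    (\<forall>ms. ms \<noteq> [] \<and> ord_legal \<alpha> (map snd ms) \<longrightarrow>
        (let rs = responses \<sigma> ms in
          Ffindim e F (fst (last rs)) \<and> fst (last rs) \<subseteq> X \<inter> tailsp e F (fst (last ms)) \<and>
          snd (last rs) \<noteq> 0 \<and> snd (last rs) \<in> sumset (map fst rs) \<and>
          (is_zero (snd (last ms)) \<longrightarrow> P (map snd rs))))"

definition A_strategy_wins :: "(nat \<Rightarrow> 'a::banach) \<Rightarrow> real set \<Rightarrow> 'a set \<Rightarrow> 'o::wellorder \<Rightarrow>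
    ('a list \<Rightarrow> 'a list \<Rightarrow> bool) \<Rightarrow> (('a set \<times> 'a \<times> 'a set \<times> 'o) list \<Rightarrow> int) \<Rightarrow>
    (('a set \<times> 'a \<times> 'a set \<times> 'o) list \<Rightarrow> 'a set \<times> 'a) \<Rightarrow> bool" where
  "A_strategy_wins e F X \<alpha> P \<tau> \<sigma> \<longleftrightarrow>
    (\<forall>ms. ms \<noteq> [] \<and> ord_legal \<alpha> (map (\<lambda>m. snd (snd (snd m))) ms) \<and>
           (\<forall>l<length ms.
              Ffindim e F (fst (ms ! l)) \<and>
              fst (ms ! l) \<subseteq> X \<inter> tailsp e F (\<tau> (take l ms)) \<and>
              fst (snd (ms ! l)) \<noteq> 0 \<and>
              fst (snd (ms ! l)) \<in> sumset (map fst (take (Suc l) ms)) \<and>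
              block_subspace e F (fst (snd (snd (ms ! l)))) \<and>
              fst (snd (snd (ms ! l))) \<subseteq> X) \<longrightarrow>
        (let rs = responses \<sigma> ms in
          Ffindim e F (fst (last rs)) \<and> fst (last rs) \<subseteq> fst (snd (snd (last ms))) \<and>
          snd (last rs) \<noteq> 0 \<and> snd (last rs) \<in> sumset (map fst rs) \<and>
          (is_zero (snd (snd (snd (last ms)))) \<longrightarrow>
             P (map (\<lambda>m. fst (snd m)) ms) (map snd rs))))"

lemma II_wins_G_iff:
  "II_wins_G e F X \<alpha> P \<longleftrightarrow> (is_zero \<alpha> \<longrightarrow> P []) \<and> (\<exists>\<sigma>. G_strategy_wins e F X \<alpha> P \<sigma>)"
  unfolding II_wins_G_def G_strategy_wins_def responses_def ..

lemma II_wins_F_iff: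
  "II_wins_F e F X \<alpha> P \<longleftrightarrow> (is_zero \<alpha> \<longrightarrow> P []) \<and> (\<exists>\<sigma>. F_strategy_wins e F X \<alpha> P \<sigma>)"
  unfolding II_wins_F_def F_strategy_wins_def responses_def ..

lemma II_wins_A_iff:
  "II_wins_A e F X \<alpha> P \<longleftrightarrow> (is_zero \<alpha> \<longrightarrow> P [] []) \<and> (\<exists>\<tau> \<sigma>. A_strategy_wins e F X \<alpha> P \<tau> \<sigma>)"
  unfolding II_wins_A_def A_strategy_wins_def responses_def ..

lemma ord_legal_take: "ord_legal \<alpha> \<xi>s \<Longrightarrow> ord_legal \<alpha> (take k \<xi>s)"
  unfolding ord_legal_def by auto

lemma F_strategy_winsD:
  assumes "F_strategy_wins e F X \<alpha> P \<sigma>" "ms \<noteq> []" "ord_legal \<alpha> (map snd ms)"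
  shows "Ffindim e F (fst (\<sigma> ms)) \<and> fst (\<sigma> ms) \<subseteq> X \<inter> tailsp e F (fst (last ms)) \<and>
    snd (\<sigma> ms) \<noteq> 0 \<and> snd (\<sigma> ms) \<in> sumset (map fst (responses \<sigma> ms)) \<and>
    (is_zero (snd (last ms)) \<longrightarrow> P (map snd (responses \<sigma> ms)))"
proof -
  have "let rs = responses \<sigma> ms in
      Ffindim e F (fst (last rs)) \<and> fst (last rs) \<subseteq> X \<inter> tailsp e F (fst (last ms)) \<and>
      snd (last rs) \<noteq> 0 \<and> snd (last rs) \<in> sumset (map fst rs) \<and>
      (is_zero (snd (last ms)) \<longrightarrow> P (map snd rs))"
    using assms unfolding F_strategy_wins_def by blast
  then show ?thesis
    unfolding Let_def last_responses[OF assms(2)] .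
qed

lemma F_strategy_wins_round:
  assumes "F_strategy_wins e F X \<alpha> P \<sigma>" "ord_legal \<alpha> (map snd ms)" "l < length ms"
  defines "r \<equiv> responses \<sigma> ms ! l"
  shows "Ffindim e F (fst r) \<and> fst r \<subseteq> X \<inter> tailsp e F (fst (ms ! l)) \<and>
    snd r \<noteq> 0 \<and> snd r \<in> sumset (map fst (take (Suc l) (responses \<sigma> ms)))"
proof -
  have ne: "take (Suc l) ms \<noteq> []" and legal: "ord_legal \<alpha> (map snd (take (Suc l) ms))"
    using assms(3) ord_legal_take[OF assms(2), of "Suc l"] by (auto simp: take_map)
  have r: "\<sigma> (take (Suc l) ms) = r" and last: "last (take (Suc l) ms) = ms ! l"
    using assms(3) by (simp_all add: r_def nth_responses take_Suc_conv_app_nth)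
  show ?thesis
    using F_strategy_winsD[OF assms(1) ne legal] unfolding r last responses_take by blast
qed

lemma A_strategy_winsD:
  assumes "A_strategy_wins e F X \<alpha> P \<tau> \<sigma>" "ms \<noteq> []"
    and "ord_legal \<alpha> (map (\<lambda>m. snd (snd (snd m))) ms)"
    and "\<forall>l<length ms.
      Ffindim e F (fst (ms ! l)) \<and> fst (ms ! l) \<subseteq> X \<inter> tailsp e F (\<tau> (take l ms)) \<and>
      fst (snd (ms ! l)) \<noteq> 0 \<and> fst (snd (ms ! l)) \<in> sumset (map fst (take (Suc l) ms)) \<and>
      block_subspace e F (fst (snd (snd (ms ! l)))) \<and> fst (snd (snd (ms ! l))) \<subseteq> X"
  shows "Ffindim e F (fst (\<sigma> ms)) \<and> fst (\<sigma> ms) \<subseteq> fst (snd (snd (last ms))) \<and>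
    snd (\<sigma> ms) \<noteq> 0 \<and> snd (\<sigma> ms) \<in> sumset (map fst (responses \<sigma> ms)) \<and>
    (is_zero (snd (snd (snd (last ms)))) \<longrightarrow>
      P (map (\<lambda>m. fst (snd m)) ms) (map snd (responses \<sigma> ms)))"
proof -
  have "let rs = responses \<sigma> ms in
      Ffindim e F (fst (last rs)) \<and> fst (last rs) \<subseteq> fst (snd (snd (last ms))) \<and>
      snd (last rs) \<noteq> 0 \<and> snd (last rs) \<in> sumset (map fst rs) \<and>
      (is_zero (snd (snd (snd (last ms)))) \<longrightarrow>
        P (map (\<lambda>m. fst (snd m)) ms) (map snd rs))"
    using assms unfolding A_strategy_wins_def by blast
  then show ?thesis
    unfolding Let_def last_responses[OF assms(2)] .
qed

text \<open>relay \<tau> \<sigma> ms is the pair of I's moves in the simulated F-play and in the simulated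
  A-play, driven by I's moves ms in G, with II's integers from \<tau> and I's (E, u) from \<sigma>.\<close>

definition relay_round :: "(('a set \<times> 'a \<times> 'a set \<times> 'o) list \<Rightarrow> int) \<Rightarrow>
    ((int \<times> 'o) list \<Rightarrow> 'a set \<times> 'a) \<Rightarrow> 'a set \<times> 'o \<Rightarrow>
    (int \<times> 'o) list \<times> ('a set \<times> 'a \<times> 'a set \<times> 'o) list \<Rightarrow>
    (int \<times> 'o) list \<times> ('a set \<times> 'a \<times> 'a set \<times> 'o) list" where
  "relay_round \<tau> \<sigma> m p =
    (let fs = fst p @ [(\<tau> (snd p), snd m)]; r = \<sigma> fs
     in (fs, snd p @ [(fst r, snd r, fst m, snd m)]))"

definition relay :: "(('a set \<times> 'a \<times> 'a set \<times> 'o) list \<Rightarrow> int) \<Rightarrow>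
    ((int \<times> 'o) list \<Rightarrow> 'a set \<times> 'a) \<Rightarrow> ('a set \<times> 'o) list \<Rightarrow>
    (int \<times> 'o) list \<times> ('a set \<times> 'a \<times> 'a set \<times> 'o) list" where
  "relay \<tau> \<sigma> ms = fold (relay_round \<tau> \<sigma>) ms ([], [])"

lemma relay_snoc: "relay \<tau> \<sigma> (ms @ [m]) = relay_round \<tau> \<sigma> m (relay \<tau> \<sigma> ms)"
  by (simp add: relay_def)

lemma length_relay:
  "length (fst (relay \<tau> \<sigma> ms)) = length ms" "length (snd (relay \<tau> \<sigma> ms)) = length ms"
  by (induct ms rule: rev_induct) (auto simp: relay_snoc relay_round_def Let_def relay_def)

lemma relay_take:
  "relay \<tau> \<sigma> (take k ms) = (take k (fst (relay \<tau> \<sigma> ms)), take k (snd (relay \<tau> \<sigma> ms)))"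
proof (induct ms rule: rev_induct)
  case Nil
  then show ?case by (simp add: relay_def)
next
  case (snoc m ms)
  then show ?case
    using length_relay[of \<tau> \<sigma> ms] length_relay[of \<tau> \<sigma> "ms @ [m]"]
    by (cases "k \<le> length ms") (simp_all add: relay_snoc relay_round_def Let_def)
qed

lemma nth_relay:
  assumes "l < length ms"
  shows "fst (relay \<tau> \<sigma> ms) ! l = (\<tau> (take l (snd (relay \<tau> \<sigma> ms))), snd (ms ! l))"
    and "snd (relay \<tau> \<sigma> ms) ! l =
      (let r = responses \<sigma> (fst (relay \<tau> \<sigma> ms)) ! l in (fst r, snd r, ms ! l))"
proof -
  have "fst (relay \<tau> \<sigma> ms) ! l = (\<tau> (take l (snd (relay \<tau> \<sigma> ms))), snd (ms ! l)) \<and>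
    snd (relay \<tau> \<sigma> ms) ! l = (let r = \<sigma> (take (Suc l) (fst (relay \<tau> \<sigma> ms))) in (fst r, snd r, ms ! l))"
    using assms
  proof (induct ms arbitrary: l rule: rev_induct)
    case Nil
    then show ?case by simp
  next
    case (snoc m ms)
    then show ?case
      using length_relay[of \<tau> \<sigma> ms]
      by (cases "l < length ms") (auto simp: relay_snoc relay_round_def Let_def nth_append)
  qed
  then show "fst (relay \<tau> \<sigma> ms) ! l = (\<tau> (take l (snd (relay \<tau> \<sigma> ms))), snd (ms ! l))"
    and "snd (relay \<tau> \<sigma> ms) ! l =
      (let r = responses \<sigma> (fst (relay \<tau> \<sigma> ms)) ! l in (fst r, snd r, ms ! l))"
    using assms by (simp_all add: nth_responses length_relay)
qed

lemma relay_ordinals: "map snd (fst (relay \<tau> \<sigma> ms)) = map snd ms"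
  by (auto intro!: nth_equalityI simp: length_relay nth_relay)

lemma relay_G_moves: "map (\<lambda>m. snd (snd m)) (snd (relay \<tau> \<sigma> ms)) = ms"
  by (auto intro!: nth_equalityI simp: length_relay nth_relay Let_def)

lemma relay_vectors:
  "map (\<lambda>m. fst (snd m)) (snd (relay \<tau> \<sigma> ms)) = map snd (responses \<sigma> (fst (relay \<tau> \<sigma> ms)))"
  "map fst (snd (relay \<tau> \<sigma> ms)) = map fst (responses \<sigma> (fst (relay \<tau> \<sigma> ms)))"
  by (auto intro!: nth_equalityI simp: length_relay nth_relay Let_def)

lemma last_relay:
  assumes "ms \<noteq> []"
  shows "snd (last (fst (relay \<tau> \<sigma> ms))) = snd (last ms)"
    and "snd (snd (last (snd (relay \<tau> \<sigma> ms)))) = last ms"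
proof -
  have "fst (relay \<tau> \<sigma> ms) \<noteq> []" and "snd (relay \<tau> \<sigma> ms) \<noteq> []"
    using assms length_relay[of \<tau> \<sigma> ms] by auto
  with assms show "snd (last (fst (relay \<tau> \<sigma> ms))) = snd (last ms)"
    and "snd (snd (last (snd (relay \<tau> \<sigma> ms)))) = last ms"
    using arg_cong[OF relay_ordinals[of \<tau> \<sigma> ms], of last]
      arg_cong[OF relay_G_moves[of \<tau> \<sigma> ms], of last]
    by (simp_all add: last_map)
qed

lemma relay_A_moves_legal:
  fixes \<tau> :: "('a::banach set \<times> 'a \<times> 'a set \<times> 'o::wellorder) list \<Rightarrow> int"
  assumes "F_strategy_wins e F X \<alpha> P \<sigma>" "ord_legal \<alpha> (map snd ms)"
    and "\<forall>l<length ms. block_subspace e F (fst (ms ! l)) \<and> fst (ms ! l) \<subseteq> X"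
  defines "as \<equiv> snd (relay \<tau> \<sigma> ms)"
  shows "\<forall>l<length as.
      Ffindim e F (fst (as ! l)) \<and> fst (as ! l) \<subseteq> X \<inter> tailsp e F (\<tau> (take l as)) \<and>
      fst (snd (as ! l)) \<noteq> 0 \<and> fst (snd (as ! l)) \<in> sumset (map fst (take (Suc l) as)) \<and>
      block_subspace e F (fst (snd (snd (as ! l)))) \<and> fst (snd (snd (as ! l))) \<subseteq> X"
proof (intro allI impI)
  fix l
  assume "l < length as"
  then have l: "l < length ms"
    by (simp add: as_def length_relay)
  define fs where "fs = fst (relay \<tau> \<sigma> ms)"
  have "ord_legal \<alpha> (map snd fs)"
    using assms(2) by (simp add: fs_def relay_ordinals)
  moreover have "map fst (take (Suc l) as) = map fst (take (Suc l) (responses \<sigma> fs))"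
    by (metis take_map relay_vectors(2) as_def fs_def)
  ultimately show "Ffindim e F (fst (as ! l)) \<and> fst (as ! l) \<subseteq> X \<inter> tailsp e F (\<tau> (take l as)) \<and>
      fst (snd (as ! l)) \<noteq> 0 \<and> fst (snd (as ! l)) \<in> sumset (map fst (take (Suc l) as)) \<and>
      block_subspace e F (fst (snd (snd (as ! l)))) \<and> fst (snd (snd (as ! l))) \<subseteq> X"
    using F_strategy_wins_round[OF assms(1), of fs l] assms(3) l nth_relay[OF l, of \<tau> \<sigma>]
    by (simp add: as_def fs_def Let_def length_relay)
qed

lemma G_strategy_wins_relay:
  fixes \<alpha> :: "'o::wellorder" and \<sigma>F :: "(int \<times> 'o) list \<Rightarrow> 'a::banach set \<times> 'a"
  assumes F_wins: "F_strategy_wins e F X \<alpha> PF \<sigma>F"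
    and A_wins: "A_strategy_wins e F X \<alpha> PA \<tau> \<sigma>A"
    and compose: "\<And>us vs. PF us \<Longrightarrow> PA us vs \<Longrightarrow> PG vs"
  shows "G_strategy_wins e F X \<alpha> PG (\<lambda>ms. \<sigma>A (snd (relay \<tau> \<sigma>F ms)))"
  unfolding G_strategy_wins_def
proof (intro allI impI)
  fix ms :: "('a set \<times> 'o) list"
  assume "ms \<noteq> [] \<and> ord_legal \<alpha> (map snd ms) \<and>
    (\<forall>l<length ms. block_subspace e F (fst (ms ! l)) \<and> fst (ms ! l) \<subseteq> X)"
  then have ne: "ms \<noteq> []" and legal: "ord_legal \<alpha> (map snd ms)"
    and blocks: "\<forall>l<length ms. block_subspace e F (fst (ms ! l)) \<and> fst (ms ! l) \<subseteq> X"
    by auto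
  define fs where "fs = fst (relay \<tau> \<sigma>F ms)"
  define as where "as = snd (relay \<tau> \<sigma>F ms)"
  have fs_ne: "fs \<noteq> []" and as_ne: "as \<noteq> []"
    using ne length_relay[of \<tau> \<sigma>F ms] by (auto simp: fs_def as_def)
  have F_outcome: "is_zero (snd (last ms)) \<Longrightarrow> PF (map (\<lambda>m. fst (snd m)) as)"
    using F_strategy_winsD[OF F_wins fs_ne] legal last_relay(1)[OF ne]
    by (simp add: fs_def as_def relay_ordinals relay_vectors(1))
  have A_legal: "ord_legal \<alpha> (map (\<lambda>m. snd (snd (snd m))) as)"
    using legal arg_cong[OF relay_G_moves[of \<tau> \<sigma>F ms], of "map snd"]
    by (simp add: as_def comp_def)
  have same_responses: "responses (\<lambda>ms. \<sigma>A (snd (relay \<tau> \<sigma>F ms))) ms = responses \<sigma>A as"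
    by (simp add: responses_def relay_take as_def length_relay)
  have last_as: "snd (snd (last as)) = last ms"
    using last_relay(2)[OF ne] by (simp add: as_def)
  show "let rs = responses (\<lambda>ms. \<sigma>A (snd (relay \<tau> \<sigma>F ms))) ms in
      Ffindim e F (fst (last rs)) \<and> fst (last rs) \<subseteq> fst (last ms) \<and>
      snd (last rs) \<noteq> 0 \<and> snd (last rs) \<in> sumset (map fst rs) \<and>
      (is_zero (snd (last ms)) \<longrightarrow> PG (map snd rs))"
    using A_strategy_winsD[OF A_wins as_ne A_legal
        relay_A_moves_legal[OF F_wins legal blocks, of \<tau>, folded as_def]] F_outcome
    unfolding Let_def same_responses last_responses[OF as_ne] last_as
    by (blast intro: compose)
qed

lemma equiv_seq_sym: "C > 0 \<Longrightarrow> equiv_seq C xs ys \<Longrightarrow> equiv_seq C ys xs"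
  unfolding equiv_seq_def by (auto simp: field_simps)

lemma equiv_seq_trans:
  assumes "C > 0" "K > 0" "equiv_seq C xs ys" "equiv_seq K ys zs"
  shows "equiv_seq (C * K) xs zs"
  unfolding equiv_seq_def
proof (intro conjI allI)
  show "length xs = length zs" using assms(3,4) unfolding equiv_seq_def by simp
  fix a :: "nat \<Rightarrow> real"
  define nx where "nx = norm (\<Sum>i<length xs. a i *\<^sub>R xs ! i)"
  define ny where "ny = norm (\<Sum>i<length ys. a i *\<^sub>R ys ! i)"
  define nz where "nz = norm (\<Sum>i<length zs. a i *\<^sub>R zs ! i)"
  have "nx \<le> C * ny" "ny \<le> C * nx" "ny \<le> K * nz" "nz \<le> K * ny"
    using assms unfolding equiv_seq_def nx_def ny_def nz_def by (auto simp: field_simps)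
  then have "nx \<le> (C * K) * nz" "nz \<le> (C * K) * nx"
    using assms(1,2) by (smt (verit) mult.assoc mult.commute mult_left_mono)+
  then show "nx / (C * K) \<le> nz" "nz \<le> C * K * nx"
    using assms(1,2) by (simp_all add: field_simps)
qed

theorem lemma4p6:
  fixes e :: "nat \<Rightarrow> 'a::banach" and F :: "real set" and X :: "'a set"
    and y :: "nat \<Rightarrow> 'a" and \<alpha> :: "'o::wellorder" and K C :: real
  assumes "schauder_basis e"
    and "countable_subfield F"
    and "norm_closed e F"
    and "block_subspace e F X"
    and "block_seq e F y"
    and "countable {\<beta>. \<beta> < \<alpha>}"
    and "K \<ge> 1" and "C \<ge> 1"
    and "II_wins_F e F X \<alpha> (\<lambda>xs. equiv_seq K xs (map y [0..<length xs]))"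
    and "II_wins_A e F X \<alpha> (\<lambda>us vs. equiv_seq C us vs)"
  shows "II_wins_G e F X \<alpha> (\<lambda>vs. equiv_seq (K * C) vs (map y [0..<length vs]))"
proof -
  have compose: "equiv_seq (K * C) vs (map y [0..<length vs])"
    if "equiv_seq K us (map y [0..<length us])" and "equiv_seq C us vs" for us vs :: "'a list"
  proof -
    have "length vs = length us" using that(2) by (simp add: equiv_seq_def)
    moreover have "equiv_seq (C * K) vs (map y [0..<length us])"
      using equiv_seq_trans[OF _ _ equiv_seq_sym[OF _ that(2)] that(1)] assms(7,8) by simp
    ultimately show ?thesis
      by (simp only: mult.commute)
  qed
  obtain \<sigma>F where F_wins:
      "F_strategy_wins e F X \<alpha> (\<lambda>xs. equiv_seq K xs (map y [0..<length xs])) \<sigma>F"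
    using assms(9) II_wins_F_iff by blast
  obtain \<tau> \<sigma>A where A_wins: "A_strategy_wins e F X \<alpha> (\<lambda>us vs. equiv_seq C us vs) \<tau> \<sigma>A"
    using assms(10) II_wins_A_iff by blast
  have "G_strategy_wins e F X \<alpha> (\<lambda>vs. equiv_seq (K * C) vs (map y [0..<length vs]))
      (\<lambda>ms. \<sigma>A (snd (relay \<tau> \<sigma>F ms)))"
    by (rule G_strategy_wins_relay[OF F_wins A_wins]) (rule compose)
  moreover have "equiv_seq (K * C) [] (map y [0..<length ([] :: 'a list)])"
    by (simp add: equiv_seq_def)
  ultimately show ?thesis
    unfolding II_wins_G_iff by blast
qed

end
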